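(* Let $h\ge-1$ be an integer and $n\ge0$, excluding the case $(n,h)=(0,-1)$. The number of partitions $\lambda\vdash n$ having an $h$-fixed hook arising from a part of size $1$ equals the number of partitions of $n$ in which the part $1$ occurs exactly $h+1$ times. Equivalently, the generating function of the former is $q^{h+1}/(q^2;q)_\infty$ for $h\ge0$ and $1/(q^2;q)_\infty-1$ for $h=-1$.
   Context: A partition $\lambda=(\lambda_1\ge\cdots\ge\lambda_t>0)$ of $n$ has first-column hook lengths $h_{s,1}(\lambda)=\lambda_s+(t-s)$. An $h$-fixed hook arising from a part of size $k$ is an index $s$ with $h_{s,1}(\lambda)=s+h$ and $\lambda_s=k$. Notation: $(a;q)_\infty=\prod_{j\ge0}(1-aq^j)$. *)

theory Defs
  imports Main
begin

text \<open>A partition of n: a weakly decreasing list of positive parts summing to n.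
  Parts are lambda_1 >= ... >= lambda_t, stored as xs ! (s-1) for s = 1..t.\<close>
definition partitions :: "nat \<Rightarrow> nat list set" where
  "partitions n = {xs. sorted_wrt (\<ge>) xs \<and> (\<forall>x\<in>set xs. 0 < x) \<and> sum_list xs = n}"

text \<open>First-column hook length h_{s,1} = lambda_s + (t - s), for 1 <= s <= t.\<close>
definition hook1 :: "nat list \<Rightarrow> nat \<Rightarrow> nat" where
  "hook1 xs s = xs ! (s - 1) + (length xs - s)"

definition has_fixed_hook :: "int \<Rightarrow> nat \<Rightarrow> nat list \<Rightarrow> bool" where
  "has_fixed_hook h k xs \<longleftrightarrow>
     (\<exists>s\<in>{1..length xs}. int (hook1 xs s) = int s + h \<and> xs ! (s - 1) = k)"

end

(* Write a partition as its parts >= 2 followed by m ones, and put h = h1 - 1.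
   An h-fixed hook at a part 1 in row s means 1 + (t - s) = s + h1 - 1, which has a
   solution s among the rows of ones iff m > 0 and m = (number of parts >= 2) + h1 + 2j
   for some j.  Given a partition with exactly h1 ones, lowering each part >= 3 by one
   and dissolving every part 2 into two ones produces such a partition of the same
   size (with j the number of twos); conversely, raising every part >= 2 by one, keeping
   h1 ones and pairing the remaining 2j ones into twos inverts this. *)

theory Submission
  imports Defs
begin

lemma count_list_replicate:
  "count_list (replicate n x) y = (if x = y then n else 0)"
  by (induction n) auto

lemma sorted_desc_filter_append_replicate:
  fixes xs :: "'a::linorder list"
  assumes "sorted_wrt (\<ge>) xs" and "\<forall>x\<in>set xs. k \<le> x"
  shows "filter (\<lambda>x. k < x) xs @ replicate (count_list xs k) k = xs"
  using assms
proof (induction xs)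
  case Nil
  then show ?case by simp
next
  case (Cons x xs)
  show ?case
  proof (cases "k < x")
    case True
    with Cons show ?thesis by simp
  next
    case False
    with Cons.prems have "\<forall>y\<in>set (x # xs). y = k" by fastforce
    then show ?thesis
      by (simp add: count_list_eq_length_filter replicate_length_same)
  qed
qed

lemma sorted_wrt_geq_replicate: "sorted_wrt (\<ge>) (replicate n (x::'a::order))"
  by (induction n) auto

lemma append_replicate_in_partitions:
  assumes "v \<in> partitions n" and "\<forall>x\<in>set v. k \<le> x" and "0 < k"
  shows "v @ replicate m k \<in> partitions (n + m * k)"
  using assms unfolding partitions_def
  by (auto simp: sorted_wrt_append sorted_wrt_geq_replicate sum_list_replicate)

lemma partition_eq_big_parts_append_ones:
  assumes "xs \<in> partitions n"
  obtains v where "sorted_wrt (\<ge>) v" and "\<forall>x\<in>set v. 1 < x"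
    and "xs = v @ replicate (count_list xs 1) 1"
proof
  have "\<forall>x\<in>set xs. 1 \<le> x" "sorted_wrt (\<ge>) xs"
    using assms unfolding partitions_def by auto
  then show "xs = filter (\<lambda>x. 1 < x) xs @ replicate (count_list xs 1) 1"
    by (simp add: sorted_desc_filter_append_replicate)
  show "sorted_wrt (\<ge>) (filter (\<lambda>x. 1 < x) xs)"
    using \<open>sorted_wrt (\<ge>) xs\<close> by (simp add: sorted_wrt_filter)
qed simp

lemma partition_eq_big_parts_append_twos_ones:
  assumes "xs \<in> partitions n"
  obtains v where "sorted_wrt (\<ge>) v" and "\<forall>x\<in>set v. 1 < x"
    and "xs = map Suc v @ replicate (count_list xs 2) 2 @ replicate (count_list xs 1) 1"
proof -
  obtain u where u: "sorted_wrt (\<ge>) u" "\<forall>x\<in>set u. 1 < x"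
    and xs: "xs = u @ replicate (count_list xs 1) 1"
    using partition_eq_big_parts_append_ones[OF assms] .
  define v where "v = map (\<lambda>x. x - 1) (filter (\<lambda>x. 2 < x) u)"
  have "count_list u 2 = count_list xs 2"
    using arg_cong[OF xs, of "\<lambda>l. count_list l 2"] by (simp add: count_list_replicate)
  moreover have "filter (\<lambda>x. 2 < x) u @ replicate (count_list u 2) 2 = u"
    using u by (intro sorted_desc_filter_append_replicate) auto
  moreover have "map Suc v = filter (\<lambda>x. 2 < x) u"
    unfolding v_def by (induction u) auto
  ultimately have "u = map Suc v @ replicate (count_list xs 2) 2"
    by simp
  with xs have "xs = map Suc v @ replicate (count_list xs 2) 2 @ replicate (count_list xs 1) 1"
    by (metis append.assoc)
  moreover have "sorted_wrt (\<ge>) v"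
    unfolding v_def sorted_wrt_map
    by (rule sorted_wrt_mono_rel[OF _ sorted_wrt_filter[OF u(1)]]) (simp add: diff_le_mono)
  moreover have "\<forall>x\<in>set v. 1 < x"
    unfolding v_def by auto
  ultimately show thesis
    using that by blast
qed

lemma has_fixed_hook_one_iff:
  assumes "\<forall>x\<in>set v. 1 < x"
  shows "has_fixed_hook (int h1 - 1) 1 (v @ replicate m 1)
    \<longleftrightarrow> 0 < m \<and> (\<exists>j. m = length v + h1 + 2 * j)"
proof
  assume "has_fixed_hook (int h1 - 1) 1 (v @ replicate m 1)"
  then obtain s where s: "1 \<le> s" "s \<le> length v + m"
    and hook: "int (hook1 (v @ replicate m 1) s) = int s + (int h1 - 1)"
    and one: "(v @ replicate m 1) ! (s - 1) = 1"
    unfolding has_fixed_hook_def by auto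
  have "length v < s"
  proof (rule ccontr)
    assume "\<not> length v < s"
    with s(1) have row: "s - 1 < length v"
      by arith
    with one have "v ! (s - 1) = 1"
      by (simp add: nth_append)
    with assms nth_mem[OF row] show False
      by fastforce
  qed
  with s hook one have "length v + m + 2 = 2 * s + h1"
    unfolding hook1_def by auto
  with \<open>length v < s\<close> s(2) show "0 < m \<and> (\<exists>j. m = length v + h1 + 2 * j)"
    by (intro conjI exI[of _ "s - length v - 1"]) auto
next
  assume "0 < m \<and> (\<exists>j. m = length v + h1 + 2 * j)"
  then obtain j where "0 < m" and m: "m = length v + h1 + 2 * j"
    by auto
  let ?s = "length v + j + 1"
  have "j < m"
    using \<open>0 < m\<close> m by linarith
  then have "?s \<in> {1..length (v @ replicate m 1)}"
    by simp
  moreover have one: "(v @ replicate m 1) ! (?s - 1) = 1"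
    using \<open>j < m\<close> by (simp add: nth_append)
  moreover have "int (hook1 (v @ replicate m 1) ?s) = int ?s + (int h1 - 1)"
    using m \<open>j < m\<close> unfolding hook1_def one by simp
  ultimately show "has_fixed_hook (int h1 - 1) 1 (v @ replicate m 1)"
    unfolding has_fixed_hook_def by blast
qed

definition lower_parts :: "nat list \<Rightarrow> nat list" where
  "lower_parts xs = map (\<lambda>x. x - 1) (filter (\<lambda>x. 2 < x) xs) @
     replicate (length (filter (\<lambda>x. 2 < x) xs) + count_list xs 1 + 2 * count_list xs 2) 1"

definition raise_parts :: "nat \<Rightarrow> nat list \<Rightarrow> nat list" where
  "raise_parts h1 ys = map Suc (filter (\<lambda>x. 1 < x) ys) @
     replicate ((count_list ys 1 - length (filter (\<lambda>x. 1 < x) ys) - h1) div 2) 2 @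
     replicate h1 1"

lemma lower_parts_eq:
  assumes "\<forall>x\<in>set v. 1 < x"
  shows "lower_parts (map Suc v @ replicate c 2 @ replicate m 1)
    = v @ replicate (length v + m + 2 * c) 1"
  using assms by (auto simp: lower_parts_def count_list_replicate count_list_0_iff comp_def)

lemma raise_parts_eq:
  assumes "\<forall>x\<in>set v. 1 < x"
  shows "raise_parts h1 (v @ replicate (length v + h1 + 2 * j) 1)
    = map Suc v @ replicate j 2 @ replicate h1 1"
  using assms by (auto simp: raise_parts_def count_list_replicate)

lemma lower_parts_in_fixed_hook_partitions:
  assumes "xs \<in> partitions n" and "count_list xs 1 = h1" and "0 < n \<or> 0 < h1"
  shows "lower_parts xs \<in> partitions n"
    and "has_fixed_hook (int h1 - 1) 1 (lower_parts xs)"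
    and "raise_parts h1 (lower_parts xs) = xs"
proof -
  define c where "c = count_list xs 2"
  obtain v where v: "sorted_wrt (\<ge>) v" "\<forall>x\<in>set v. 1 < x"
    and xs: "xs = map Suc v @ replicate c 2 @ replicate h1 1"
    using partition_eq_big_parts_append_twos_ones[OF assms(1)] unfolding c_def assms(2) .
  have n: "n = sum_list v + (length v + h1 + 2 * c)"
    using assms(1) unfolding partitions_def xs by (simp add: sum_list_Suc sum_list_replicate)
  have lower: "lower_parts xs = v @ replicate (length v + h1 + 2 * c) 1"
    unfolding xs using v(2) by (rule lower_parts_eq)
  have "v \<in> partitions (sum_list v)"
    using v unfolding partitions_def by auto
  then have "v @ replicate (length v + h1 + 2 * c) 1
      \<in> partitions (sum_list v + (length v + h1 + 2 * c) * 1)"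
    by (rule append_replicate_in_partitions) (use v(2) in auto)
  then show "lower_parts xs \<in> partitions n"
    unfolding lower n by simp
  have "0 < length v + h1 + 2 * c"
    using assms(3) n by (cases v) auto
  then show "has_fixed_hook (int h1 - 1) 1 (lower_parts xs)"
    unfolding lower has_fixed_hook_one_iff[OF v(2)] by blast
  show "raise_parts h1 (lower_parts xs) = xs"
    unfolding lower raise_parts_eq[OF v(2)] by (rule xs[symmetric])
qed

lemma raise_parts_in_count_ones_partitions:
  assumes "ys \<in> partitions n" and "has_fixed_hook (int h1 - 1) 1 ys"
  shows "raise_parts h1 ys \<in> partitions n"
    and "count_list (raise_parts h1 ys) 1 = h1"
    and "lower_parts (raise_parts h1 ys) = ys"
proof -
  define m where "m = count_list ys 1"
  obtain v where v: "sorted_wrt (\<ge>) v" "\<forall>x\<in>set v. 1 < x" and ys: "ys = v @ replicate m 1"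
    using partition_eq_big_parts_append_ones[OF assms(1)] unfolding m_def .
  obtain j where m: "m = length v + h1 + 2 * j"
    using assms(2) unfolding ys has_fixed_hook_one_iff[OF v(2)] by blast
  have raise: "raise_parts h1 ys = map Suc v @ replicate j 2 @ replicate h1 1"
    unfolding ys m using v(2) by (rule raise_parts_eq)
  have "map Suc v \<in> partitions (sum_list (map Suc v))"
    using v(1) unfolding partitions_def by (simp add: sorted_wrt_map)
  then have "map Suc v @ replicate j 2 \<in> partitions (sum_list (map Suc v) + j * 2)"
    by (rule append_replicate_in_partitions) (use v(2) in auto)
  then have "(map Suc v @ replicate j 2) @ replicate h1 1
      \<in> partitions (sum_list (map Suc v) + j * 2 + h1 * 1)"
    by (rule append_replicate_in_partitions) (use v(2) in auto)
  moreover have "sum_list (map Suc v) + j * 2 + h1 * 1 = n"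
    using assms(1) m unfolding partitions_def ys by (simp add: sum_list_Suc sum_list_replicate)
  ultimately show "raise_parts h1 ys \<in> partitions n"
    unfolding raise by simp
  show "count_list (raise_parts h1 ys) 1 = h1"
    unfolding raise using v(2) by (auto simp: count_list_replicate count_list_0_iff)
  show "lower_parts (raise_parts h1 ys) = ys"
    unfolding raise lower_parts_eq[OF v(2)] using ys m by simp
qed

lemma bij_betw_lower_parts:
  assumes "0 < n \<or> 0 < h1"
  shows "bij_betw lower_parts {xs \<in> partitions n. count_list xs 1 = h1}
    {ys \<in> partitions n. has_fixed_hook (int h1 - 1) 1 ys}"
  by (rule bij_betw_byWitness[where f' = "raise_parts h1"])
    (use assms lower_parts_in_fixed_hook_partitions raise_parts_in_count_ones_partitions in auto)

theorem theorem3p2: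
  fixes h :: int and n :: nat
  assumes "h \<ge> -1" and "\<not> (n = 0 \<and> h = -1)"
  shows "card {xs \<in> partitions n. has_fixed_hook h 1 xs}
       = card {xs \<in> partitions n. count_list xs 1 = nat (h + 1)}"
proof -
  define h1 where "h1 = nat (h + 1)"
  have h: "h = int h1 - 1"
    using assms(1) unfolding h1_def by simp
  have "0 < n \<or> 0 < h1"
    using assms unfolding h1_def by auto
  then have "bij_betw lower_parts {xs \<in> partitions n. count_list xs 1 = h1}
      {ys \<in> partitions n. has_fixed_hook h 1 ys}"
    unfolding h by (rule bij_betw_lower_parts)
  then show ?thesis
    unfolding h1_def by (simp add: bij_betw_same_card)
qed

end
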